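(* Let $\mathbf{X}$ and $\mathbf{Y}$ be Euclidean spaces, let $Q\subset\mathbf{Y}$ be a nonempty closed set, let $F\colon\mathbf{X}\to\mathbf{Y}$, and let $\bar x\in\mathbf{X}$. Suppose that $F$ is continuously differentiable around $\bar x$ with one-to-one derivative $\nabla F(\bar x)$, that $F(\bar x)\in Q$, and that there exists an angle $\alpha>0$ such that whenever two vectors $x,x'\in\mathbf{X}$ near $\bar x$ satisfy \[ \nabla F(x')^*\big(y-F(x')\big)=0\quad\text{and}\quad F(x)\neq y\neq F(x')\quad\text{for some } y\in P_Q\big(F(x)\big), \] then the angle between the vectors $F(x)-y$ and $F(x')-y$ is at least $\alpha$. Consider the linearized alternating projections method: given the current iterate $x$, while $F(x)\notin Q$, choose $y\in P_Q(F(x))$, choose $s\in\mathbf{X}$ minimizing $|F(x)+\nabla F(x)s-y|$, and set $x\leftarrow x+s$. Then, starting from any point $x\in\mathbf{X}$ sufficiently close to $\bar x$, this method converges linearly to a point in the solution set $F^{-1}(Q)$.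
   Context: $P_Q(v)$ denotes the set of nearest points of $Q$ to $v$; ${}^*$ denotes the adjoint of a linear map. A sequence $(x^k)$ converges linearly to $\hat x$ if there exist constants $c\in(0,1)$ and $\rho>0$ with $|x^k-\hat x|<\rho c^k$ for all $k$. *)

theory Defs
  imports "HOL-Analysis.Analysis"
begin

definition proj_set :: "'a::real_normed_vector set \<Rightarrow> 'a \<Rightarrow> 'a set" where
  "proj_set Q v = {q \<in> Q. \<forall>q'\<in>Q. norm (v - q) \<le> norm (v - q')}"

definition vec_angle :: "'a::real_inner \<Rightarrow> 'a \<Rightarrow> real" where
  "vec_angle u v = arccos ((u \<bullet> v) / (norm u * norm v))"

definition converges_linearly :: "(nat \<Rightarrow> 'a::real_normed_vector) \<Rightarrow> 'a \<Rightarrow> bool" where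
  "converges_linearly xs xhat \<longleftrightarrow>
     (\<exists>c \<rho>. 0 < c \<and> c < 1 \<and> 0 < \<rho> \<and> (\<forall>k. norm (xs k - xhat) < \<rho> * c ^ k))"

text \<open>One step of the linearized alternating projections method, with derivative F'.
  If F x is already in Q the method has stopped; we then keep the iterate constant.\<close>
definition lap_step :: "('a::euclidean_space \<Rightarrow> 'b::euclidean_space) \<Rightarrow> ('a \<Rightarrow> ('a \<Rightarrow>\<^sub>L 'b))
    \<Rightarrow> 'b set \<Rightarrow> 'a \<Rightarrow> 'a \<Rightarrow> bool" where
  "lap_step F F' Q x x_next \<longleftrightarrow>
     (if F x \<in> Q then x_next = x
      else (\<exists>y \<in> proj_set Q (F x). \<exists>s.
              (\<forall>s'. norm (F x + F' x s - y) \<le> norm (F x + F' x s' - y)) \<and>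
              x_next = x + s))"

end

theory Submission
  imports Defs
begin

text \<open>
  Let y be a nearest point of Q to F x. Minimising the distance from F z to y over a small ball
  around xbar gives a point x' near x at which F x' - y is orthogonal to the range of the
  derivative at x' (Fermat's rule). The angle condition then bounds the distance from F x' to y by
  cos alpha times the distance from F x to y, up to linearisation errors. Since x' - x is a
  competitor in the least-squares subproblem, one step of the method shrinks the distance from F x
  to Q by a fixed factor below 1 and moves x by at most a constant times that distance. Hence the
  distances decay geometrically, the steps are summable, and the iterates converge linearly to a
  point mapped into the closed set Q.
\<close>

lemma proj_set_subset: "proj_set Q v \<subseteq> Q"
  by (auto simp: proj_set_def)

lemma infdist_eq_norm_if_proj_set:
  assumes "y \<in> proj_set Q v"
  shows "infdist v Q = norm (v - y)"
proof -
  have "y \<in> Q" and "\<forall>q\<in>Q. norm (v - y) \<le> norm (v - q)"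
    using assms by (auto simp: proj_set_def)
  then have "norm (v - y) \<le> infdist v Q"
    unfolding infdist_def by (auto intro!: cINF_greatest simp: dist_norm)
  moreover have "infdist v Q \<le> norm (v - y)"
    using infdist_le[OF \<open>y \<in> Q\<close>] by (simp add: dist_norm)
  ultimately show ?thesis by linarith
qed

lemma adjoint_eq_0_if_orthogonal_range:
  fixes f :: "'a::euclidean_space \<Rightarrow> 'b::euclidean_space"
  assumes "linear f" and "\<And>h. w \<bullet> f h = 0"
  shows "adjoint f w = 0"
proof -
  have "adjoint f w \<bullet> adjoint f w = f (adjoint f w) \<bullet> w"
    by (rule adjoint_works[OF \<open>linear f\<close>])
  also have "\<dots> = 0"
    using assms(2) by (simp add: inner_commute)
  finally show ?thesis by simp
qed

lemma inner_le_cos_mult_norm_if_vec_angle_ge: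
  fixes u v :: "'a::real_inner"
  assumes "\<beta> \<le> vec_angle u v" and "0 \<le> \<beta>"
  shows "u \<bullet> v \<le> cos \<beta> * (norm u * norm v)"
proof (cases "u = 0 \<or> v = 0")
  case True
  then show ?thesis by auto
next
  case False
  let ?t = "(u \<bullet> v) / (norm u * norm v)"
  have pos: "norm u * norm v > 0"
    using False by simp
  have "-1 \<le> ?t" "?t \<le> 1"
    using Cauchy_Schwarz_ineq2[of u v] pos by (auto simp: divide_simps abs_le_iff)
  have "cos (vec_angle u v) \<le> cos \<beta>"
    using assms arccos_ubound[OF \<open>-1 \<le> ?t\<close> \<open>?t \<le> 1\<close>]
    by (intro cos_monotone_0_pi_le) (auto simp: vec_angle_def)
  then have "?t \<le> cos \<beta>"
    using \<open>-1 \<le> ?t\<close> \<open>?t \<le> 1\<close> by (simp add: vec_angle_def)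
  then show ?thesis
    using pos by (simp add: divide_simps)
qed

lemma orthogonal_derivative_at_local_min_dist:
  fixes F :: "'a::real_normed_vector \<Rightarrow> 'b::real_inner"
  assumes F': "(F has_derivative F') (at x)"
    and min: "\<forall>\<^sub>F z in at x. norm (F x - y) \<le> norm (F z - y)"
  shows "(F x - y) \<bullet> F' h = 0"
proof -
  have "((\<lambda>z. (F z - y) \<bullet> (F z - y)) has_derivative (\<lambda>h. (F x - y) \<bullet> F' h + F' h \<bullet> (F x - y))) (at x)"
    using F' by (auto intro!: derivative_eq_intros)
  moreover have "\<forall>\<^sub>F z in at x. (F x - y) \<bullet> (F x - y) \<le> (F z - y) \<bullet> (F z - y)"
    using min by eventually_elim (simp add: power_mono flip: power2_norm_eq_inner)
  ultimately have "(\<lambda>h. (F x - y) \<bullet> F' h + F' h \<bullet> (F x - y)) = (\<lambda>h. 0)"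
    by (rule has_derivative_local_min)
  from fun_cong[OF this, of h] show ?thesis
    by (simp add: inner_commute)
qed

lemma geometric_steps_imp_convergent:
  fixes xs :: "nat \<Rightarrow> 'a::banach"
  assumes c: "0 \<le> c" "c < 1" and steps: "\<And>k. norm (xs (Suc k) - xs k) \<le> K * c ^ k"
  obtains xhat where "xs \<longlonglongrightarrow> xhat" and "\<And>k. norm (xs k - xhat) \<le> K * c ^ k / (1 - c)"
proof -
  define d where "d k = xs (Suc k) - xs k" for k
  have geom: "(\<lambda>i. K * c ^ i) sums (K / (1 - c))"
    using c sums_mult[OF geometric_sums, of c K] by (simp add: field_simps)
  have "summable d"
    by (rule summable_comparison_test'[OF sums_summable[OF geom]]) (simp add: d_def steps)
  have partial: "(\<Sum>i<n. d i) = xs n - xs 0" for n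
    by (simp add: d_def sum_lessThan_telescope)
  have "(\<lambda>n. xs 0 + (\<Sum>i<n. d i)) \<longlonglongrightarrow> xs 0 + suminf d"
    by (intro tendsto_add tendsto_const summable_LIMSEQ \<open>summable d\<close>)
  then have lim: "xs \<longlonglongrightarrow> xs 0 + suminf d"
    by (simp add: partial)
  have "norm (xs k - (xs 0 + suminf d)) \<le> K * c ^ k / (1 - c)" for k
  proof -
    have tail_sum: "xs 0 + suminf d - xs k = (\<Sum>i. d (i + k))"
      using suminf_split_initial_segment[OF \<open>summable d\<close>, of k] by (simp add: partial)
    have tail_geom: "(\<lambda>i. K * c ^ (i + k)) sums (K * c ^ k / (1 - c))"
      using sums_mult[OF geom, of "c ^ k"] by (simp add: power_add field_simps)
    have "norm (\<Sum>i. d (i + k)) \<le> (\<Sum>i. K * c ^ (i + k))"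
      using steps sums_summable[OF tail_geom] by (intro norm_suminf_le) (auto simp: d_def)
    then show ?thesis
      using tail_sum sums_unique[OF tail_geom] by (metis norm_minus_commute)
  qed
  then show ?thesis
    using that lim by blast
qed

lemma converges_linearlyI:
  assumes "0 \<le> c" "c < 1" and bound: "\<And>k. norm (xs k - xhat) \<le> M * c ^ k"
  shows "converges_linearly xs xhat"
proof -
  define c' where "c' = (1 + c) / 2"
  have c': "0 < c'" "c' < 1" "c \<le> c'"
    using assms(1,2) by (auto simp: c'_def)
  have "0 \<le> M"
    using order_trans[OF norm_ge_zero bound[of 0]] by simp
  have "norm (xs k - xhat) < (M + 1) * c' ^ k" for k
  proof -
    have "M * c ^ k \<le> M * c' ^ k"
      using \<open>0 \<le> M\<close> c' assms(1) by (intro mult_left_mono power_mono) auto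
    moreover have "0 < c' ^ k"
      using c' by simp
    ultimately show ?thesis
      using bound[of k] by (simp add: algebra_simps)
  qed
  then show ?thesis
    unfolding converges_linearly_def using c' \<open>0 \<le> M\<close>
    by (intro exI[of _ c'] exI[of _ "M + 1"]) auto
qed

lemma norm_diff_le_geometric_sum:
  fixes xs :: "nat \<Rightarrow> 'a::real_normed_vector"
  assumes "c \<noteq> 1" and steps: "\<And>j. j < k \<Longrightarrow> norm (xs (Suc j) - xs j) \<le> K * c ^ j"
  shows "norm (xs k - xs 0) \<le> K * (1 - c ^ k) / (1 - c)"
proof -
  have "norm (xs k - xs 0) = norm (\<Sum>j<k. xs (Suc j) - xs j)"
    by (simp add: sum_lessThan_telescope)
  also have "\<dots> \<le> (\<Sum>j<k. K * c ^ j)"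
    using steps by (intro order_trans[OF norm_sum sum_mono]) auto
  also have "\<dots> = K * (1 - c ^ k) / (1 - c)"
    using \<open>c \<noteq> 1\<close> by (simp add: sum_distrib_left[symmetric] sum_gp_strict)
  finally show ?thesis .
qed

lemma iterates_stay_in_ball:
  fixes xs :: "nat \<Rightarrow> 'a::real_normed_vector" and D :: "nat \<Rightarrow> real"
  assumes step: "\<And>k. xs k \<in> ball a R \<Longrightarrow> D (Suc k) \<le> c * D k \<and> norm (xs (Suc k) - xs k) \<le> M * D k"
    and c: "0 \<le> c" "c < 1" and "0 \<le> M" "0 \<le> D 0"
    and start: "norm (xs 0 - a) + M * D 0 / (1 - c) < R"
  shows "xs k \<in> ball a R" and "D k \<le> c ^ k * D 0"
    and "norm (xs (Suc k) - xs k) \<le> M * D 0 * c ^ k"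
proof -
  have step_le: "norm (xs (Suc j) - xs j) \<le> M * D 0 * c ^ j"
    if "xs j \<in> ball a R" "D j \<le> c ^ j * D 0" for j
  proof -
    have "M * D j \<le> M * D 0 * c ^ j"
      using mult_left_mono[OF that(2) \<open>0 \<le> M\<close>] by (simp add: mult_ac)
    then show ?thesis
      using step[OF that(1)] by linarith
  qed
  have "0 \<le> M * D 0"
    using \<open>0 \<le> M\<close> \<open>0 \<le> D 0\<close> by simp
  have inv: "\<forall>j\<le>k. xs j \<in> ball a R \<and> D j \<le> c ^ j * D 0" for k
  proof (induction k)
    case 0
    have "0 \<le> M * D 0 / (1 - c)"
      using \<open>0 \<le> M * D 0\<close> c by simp
    then show ?case
      using start by (simp add: dist_norm norm_minus_commute)
  next
    case (Suc k)
    have "D (Suc k) \<le> c ^ Suc k * D 0"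
      using Suc step mult_left_mono[of "D k" "c ^ k * D 0" c] c(1) by fastforce
    moreover have "norm (xs (Suc k) - a) < R"
    proof -
      have "norm (xs (Suc k) - xs 0) \<le> M * D 0 * (1 - c ^ Suc k) / (1 - c)"
        using c(2) Suc step_le by (intro norm_diff_le_geometric_sum) auto
      also have "\<dots> \<le> M * D 0 / (1 - c)"
        using \<open>0 \<le> M * D 0\<close> c by (intro divide_right_mono mult_left_le) auto
      finally show ?thesis
        using start norm_triangle_ineq[of "xs 0 - a" "xs (Suc k) - xs 0"] by simp
    qed
    ultimately show ?case
      using Suc by (auto simp: dist_norm norm_minus_commute le_Suc_eq)
  qed
  then show "xs k \<in> ball a R" and "D k \<le> c ^ k * D 0"
    by auto
  then show "norm (xs (Suc k) - xs k) \<le> M * D 0 * c ^ k"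
    by (rule step_le)
qed

lemma linearization_error_le:
  fixes F :: "'a::real_normed_vector \<Rightarrow> 'b::real_normed_vector" and F' :: "'a \<Rightarrow> 'a \<Rightarrow>\<^sub>L 'b"
  assumes "convex S"
    and deriv: "\<And>z. z \<in> S \<Longrightarrow> (F has_derivative blinfun_apply (F' z)) (at z)"
    and close: "\<And>z. z \<in> S \<Longrightarrow> norm (F' z - A) \<le> \<epsilon>"
    and "a \<in> S" "b \<in> S" "z \<in> S"
  shows "norm (F a - F b - F' z (a - b)) \<le> 2 * \<epsilon> * norm (a - b)"
proof -
  have "b + t *\<^sub>R (a - b) \<in> S" if "t \<in> {0..1}" for t
    using convexD_alt[OF \<open>convex S\<close> \<open>b \<in> S\<close> \<open>a \<in> S\<close>, of t] that
    by (simp add: algebra_simps)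
  moreover have "onorm (blinfun_apply (F' w) - blinfun_apply (F' z)) \<le> 2 * \<epsilon>" if "w \<in> S" for w
  proof -
    have "norm (F' w - F' z) \<le> norm (F' w - A) + norm (F' z - A)"
      using norm_triangle_ineq4[of "F' w - A" "F' z - A"] by simp
    then show ?thesis
      using close[OF that] close[OF \<open>z \<in> S\<close>]
      by (simp add: norm_blinfun.rep_eq minus_blinfun.rep_eq fun_diff_def)
  qed
  ultimately have "norm (F a - F b - F' z (a - b)) \<le> norm (a - b) * (2 * \<epsilon>)"
    using deriv \<open>z \<in> S\<close>
    by (intro differentiable_bound_linearization[where S = S]) (auto intro: has_derivative_at_withinI)
  then show ?thesis
    by (simp add: mult.commute)
qed

lemma norm_lower_bound_perturb:
  fixes a u :: "'a::real_normed_vector"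
  assumes "B * t \<le> norm a" "norm (u - a) \<le> \<epsilon> * t" "\<epsilon> \<le> B / 2" "0 \<le> t"
  shows "B / 2 * t \<le> norm u"
proof -
  have "norm a \<le> norm u + norm (u - a)"
    using norm_triangle_ineq4[of u "u - a"] by simp
  moreover have "\<epsilon> * t \<le> B / 2 * t"
    using mult_right_mono[OF assms(3,4)] .
  ultimately show ?thesis
    using assms(1,2) by linarith
qed

lemma mem_closed_if_infdist_tendsto_0:
  assumes "closed Q" "Q \<noteq> {}" "f \<longlonglongrightarrow> l" "(\<lambda>k. infdist (f k) Q) \<longlonglongrightarrow> 0"
  shows "l \<in> Q"
proof -
  have "infdist l Q = 0"
    using LIMSEQ_unique[OF tendsto_infdist[OF assms(3)] assms(4)] .
  then show ?thesis
    using in_closed_iff_infdist_zero[OF assms(1,2)] by blast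
qed

lemma continuous_on_close_on_ball:
  fixes f :: "'a::metric_space \<Rightarrow> 'b::metric_space"
  assumes "open U" "x \<in> U" "continuous_on U f" "0 < \<epsilon>" "0 < \<delta>"
  obtains r where "0 < r" "r \<le> \<delta>" "ball x r \<subseteq> U" "\<And>z. z \<in> ball x r \<Longrightarrow> dist (f z) (f x) < \<epsilon>"
proof -
  have "isCont f x"
    using assms(1-3) continuous_on_eq_continuous_at by blast
  then obtain r1 where "0 < r1" and r1: "\<And>z. dist z x < r1 \<Longrightarrow> dist (f z) (f x) < \<epsilon>"
    using \<open>0 < \<epsilon>\<close> unfolding continuous_at_eps_delta by blast
  obtain r2 where "0 < r2" "ball x r2 \<subseteq> U"
    using assms(1,2) open_contains_ball by blast
  show ?thesis
  proof (rule that[of "min \<delta> (min r1 r2)"])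
    show "0 < min \<delta> (min r1 r2)"
      using \<open>0 < \<delta>\<close> \<open>0 < r1\<close> \<open>0 < r2\<close> by simp
    show "ball x (min \<delta> (min r1 r2)) \<subseteq> U"
      using \<open>ball x r2 \<subseteq> U\<close> by auto
    show "dist (f z) (f x) < \<epsilon>" if "z \<in> ball x (min \<delta> (min r1 r2))" for z
      using r1[of z] that by (simp add: dist_commute)
  qed simp
qed

locale locally_regular =
  fixes F :: "'a::euclidean_space \<Rightarrow> 'b::euclidean_space"
    and F' :: "'a \<Rightarrow> 'a \<Rightarrow>\<^sub>L 'b"
    and xbar :: 'a
    and r m L \<eta> :: real
  assumes deriv: "\<And>z. z \<in> ball xbar r \<Longrightarrow> (F has_derivative blinfun_apply (F' z)) (at z)"
    and linearization_error: "\<And>a b z. a \<in> ball xbar r \<Longrightarrow> b \<in> ball xbar r \<Longrightarrow> z \<in> ball xbar r \<Longrightarrow>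
      norm (F a - F b - F' z (a - b)) \<le> \<eta> * norm (a - b)"
    and deriv_bounded_below: "\<And>z h. z \<in> ball xbar r \<Longrightarrow> m * norm h \<le> norm (F' z h)"
    and bounded_below: "\<And>a b. a \<in> ball xbar r \<Longrightarrow> b \<in> ball xbar r \<Longrightarrow> m * norm (a - b) \<le> norm (F a - F b)"
    and Lipschitz_at_centre: "\<And>a. a \<in> ball xbar r \<Longrightarrow> norm (F a - F xbar) \<le> L * norm (a - xbar)"
    and r_pos: "0 < r" and m_pos: "0 < m" and L_nonneg: "0 \<le> L" and \<eta>_nonneg: "0 \<le> \<eta>"

lemma locally_regular_if_C1_injective:
  fixes F :: "'a::euclidean_space \<Rightarrow> 'b::euclidean_space" and F' :: "'a \<Rightarrow> 'a \<Rightarrow>\<^sub>L 'b"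
  assumes "open U" "xbar \<in> U"
    and deriv: "\<And>x. x \<in> U \<Longrightarrow> (F has_derivative blinfun_apply (F' x)) (at x)"
    and "continuous_on U F'"
    and B: "\<And>h. B * norm h \<le> norm (F' xbar h)"
    and \<eta>: "0 < \<eta>" "\<eta> \<le> B / 2" and "0 < \<delta>"
  obtains r where "0 < r" "r \<le> \<delta>" "locally_regular F F' xbar r (B / 2) (norm (F' xbar) + \<eta>) \<eta>"
proof -
  obtain r where "0 < r" "r \<le> \<delta>" "ball xbar r \<subseteq> U"
    and close': "\<And>z. z \<in> ball xbar r \<Longrightarrow> dist (F' z) (F' xbar) < \<eta> / 2"
    using continuous_on_close_on_ball[OF assms(1,2,4) half_gt_zero[OF \<eta>(1)] \<open>0 < \<delta>\<close>] by blast
  have in_U: "z \<in> U" if "z \<in> ball xbar r" for z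
    using that \<open>ball xbar r \<subseteq> U\<close> by blast
  have close: "norm (F' z - F' xbar) \<le> \<eta> / 2" if "z \<in> ball xbar r" for z
    using close'[OF that] by (simp add: dist_norm)
  have lin_err: "norm (F a - F b - F' z (a - b)) \<le> \<eta> * norm (a - b)"
    if "a \<in> ball xbar r" "b \<in> ball xbar r" "z \<in> ball xbar r" for a b z
    using linearization_error_le[OF convex_ball deriv[OF in_U] close that] by simp
  have "locally_regular F F' xbar r (B / 2) (norm (F' xbar) + \<eta>) \<eta>"
  proof
    fix z h assume "z \<in> ball xbar r"
    have "norm (F' z h - F' xbar h) \<le> norm (F' z - F' xbar) * norm h"
      using norm_blinfun[of "F' z - F' xbar" h] by (simp add: blinfun.diff_left)
    also have "\<dots> \<le> \<eta> / 2 * norm h"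
      using close[OF \<open>z \<in> ball xbar r\<close>] by (rule mult_right_mono) simp
    finally show "B / 2 * norm h \<le> norm (F' z h)"
      by (rule norm_lower_bound_perturb[OF B]) (use \<eta> in auto)
  next
    fix a b assume "a \<in> ball xbar r" "b \<in> ball xbar r"
    then have "norm (F a - F b - F' xbar (a - b)) \<le> \<eta> * norm (a - b)"
      using lin_err \<open>0 < r\<close> by simp
    then show "B / 2 * norm (a - b) \<le> norm (F a - F b)"
      by (rule norm_lower_bound_perturb[OF B]) (use \<eta> in auto)
  next
    fix a assume "a \<in> ball xbar r"
    have "norm (F a - F xbar) \<le> norm (F' xbar (a - xbar)) + norm (F a - F xbar - F' xbar (a - xbar))"
      using norm_triangle_ineq[of "F' xbar (a - xbar)" "F a - F xbar - F' xbar (a - xbar)"] by simp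
    then show "norm (F a - F xbar) \<le> (norm (F' xbar) + \<eta>) * norm (a - xbar)"
      using norm_blinfun[of "F' xbar" "a - xbar"] lin_err[OF \<open>a \<in> _\<close>, of xbar xbar] \<open>0 < r\<close>
      by (simp add: algebra_simps)
  qed (use deriv in_U lin_err \<eta> B[of 0] \<open>0 < r\<close> in auto)
  then show ?thesis
    using that \<open>0 < r\<close> \<open>r \<le> \<delta>\<close> by blast
qed

locale lap_setting = locally_regular +
  fixes Q :: "'b::euclidean_space set" and \<beta> :: real
  assumes closed_Q: "closed Q"
    and F_xbar: "F xbar \<in> Q"
    and angle: "\<And>x x' y. x \<in> ball xbar r \<Longrightarrow> x' \<in> ball xbar r \<Longrightarrow> y \<in> proj_set Q (F x) \<Longrightarrow>
      adjoint (blinfun_apply (F' x')) (y - F x') = 0 \<Longrightarrow> F x \<noteq> y \<Longrightarrow> y \<noteq> F x' \<Longrightarrow>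
      \<beta> \<le> vec_angle (F x - y) (F x' - y)"
    and \<beta>: "0 \<le> \<beta>" "\<beta> \<le> pi / 2"
begin

abbreviation rate :: real where "rate \<equiv> cos \<beta> + 6 * \<eta> / m"

lemma rate_nonneg: "0 \<le> rate"
  using \<beta> \<eta>_nonneg m_pos by (simp add: cos_ge_zero)

lemma scaled_norm_lt_D:
  assumes "(1 + 3 * L / m) * norm (x - xbar) < \<rho>"
  shows "norm (x - xbar) + 3 * L / m * norm (x - xbar) < \<rho>"
    and "norm (x - xbar) < \<rho>" and "3 * L / m * norm (x - xbar) < \<rho>"
proof -
  have "0 \<le> 3 * L / m * norm (x - xbar)"
    using L_nonneg m_pos by simp
  moreover show "norm (x - xbar) + 3 * L / m * norm (x - xbar) < \<rho>"
    using assms by (simp add: algebra_simps)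
  ultimately show "norm (x - xbar) < \<rho>" and "3 * L / m * norm (x - xbar) < \<rho>"
    using norm_ge_zero[of "x - xbar"] by linarith+
qed

lemma basin_radius:
  shows "0 < r / (2 * (1 + 3 * L / m))" and "(1 + 3 * L / m) * (r / (2 * (1 + 3 * L / m))) < r"
    and "r / (2 * (1 + 3 * L / m)) < r"
proof -
  have "0 < r / (2 * G) \<and> G * (r / (2 * G)) < r \<and> r / (2 * G) < r" if "1 \<le> G" for G :: real
    using that r_pos by (simp add: field_simps)
  moreover have "1 \<le> 1 + 3 * L / m"
    using L_nonneg m_pos by simp
  ultimately show "0 < r / (2 * (1 + 3 * L / m))" and "(1 + 3 * L / m) * (r / (2 * (1 + 3 * L / m))) < r"
    and "r / (2 * (1 + 3 * L / m)) < r"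
    by blast+
qed

lemma infdist_image_le:
  assumes "x \<in> ball xbar r"
  shows "infdist (F x) Q \<le> L * norm (x - xbar)"
  using infdist_le[OF F_xbar, of "F x"] Lipschitz_at_centre[OF assms] by (simp add: dist_norm)

lemma norm_proj_residual_le:
  assumes "x \<in> ball xbar r" "y \<in> proj_set Q (F x)"
  shows "norm (F x - y) \<le> L * norm (x - xbar)"
  using infdist_image_le[OF assms(1)] infdist_eq_norm_if_proj_set[OF assms(2)] by simp

lemma closer_point_near_centre:
  assumes x: "x \<in> ball xbar r" and x': "x' \<in> ball xbar r"
    and y: "y \<in> proj_set Q (F x)" and closer: "norm (F x' - y) \<le> norm (F x - y)"
  shows "m * norm (x' - xbar) \<le> 3 * L * norm (x - xbar)"
proof -
  have "m * norm (x' - xbar) \<le> norm (F x' - F xbar)"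
    using bounded_below[OF x'] r_pos by simp
  also have "\<dots> \<le> norm (F x' - y) + norm (F x - y) + norm (F x - F xbar)"
    using norm_triangle_ineq[of "F x' - y" "y - F x"] norm_triangle_ineq[of "F x' - F x" "F x - F xbar"]
    by (simp add: norm_minus_commute)
  also have "\<dots> \<le> 3 * L * norm (x - xbar)"
    using closer norm_proj_residual_le[OF x y] Lipschitz_at_centre[OF x] by simp
  finally show ?thesis .
qed

lemma stationary_point_near:
  assumes x: "(1 + 3 * L / m) * norm (x - xbar) < r" and y: "y \<in> proj_set Q (F x)"
  obtains x' where "x' \<in> ball xbar r" and "\<And>h. (F x' - y) \<bullet> F' x' h = 0"
    and "norm (F x' - y) \<le> norm (F x - y)"
proof -
  obtain \<rho> where \<rho>: "(1 + 3 * L / m) * norm (x - xbar) < \<rho>" "\<rho> < r"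
    using x dense by blast
  note x_near = scaled_norm_lt_D[OF \<rho>(1)]
  have cball_sub: "cball xbar \<rho> \<subseteq> ball xbar r"
    using \<rho>(2) by auto
  have "continuous_on (cball xbar \<rho>) (\<lambda>z. norm (F z - y))"
    using cball_sub deriv has_derivative_continuous
    by (intro continuous_on_norm continuous_on_diff continuous_on_const continuous_at_imp_continuous_on) blast
  moreover have x_in: "x \<in> cball xbar \<rho>"
    using x_near(2) by (simp add: dist_norm norm_minus_commute)
  ultimately obtain x' where x': "x' \<in> cball xbar \<rho>"
    and min: "\<And>z. z \<in> cball xbar \<rho> \<Longrightarrow> norm (F x' - y) \<le> norm (F z - y)"
    using continuous_attains_inf[OF compact_cball] by (metis empty_iff)
  have x'_r: "x' \<in> ball xbar r" and x_r: "x \<in> ball xbar r"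
    using x' x_in cball_sub by auto
  have le_x: "norm (F x' - y) \<le> norm (F x - y)"
    using min x_in .
  have "3 * L * norm (x - xbar) < m * \<rho>"
    using x_near(3) m_pos by (simp add: field_simps)
  then have "m * norm (x' - xbar) < m * \<rho>"
    using closer_point_near_centre[OF x_r x'_r y le_x] by linarith
  then have "norm (x' - xbar) < \<rho>"
    using m_pos by simp
  then have "\<forall>\<^sub>F z in at x'. z \<in> cball xbar \<rho>"
    using eventually_at_in_open'[OF open_ball, of x' xbar \<rho>]
    by (auto elim!: eventually_mono simp: dist_norm norm_minus_commute)
  then have "\<forall>\<^sub>F z in at x'. norm (F x' - y) \<le> norm (F z - y)"
    by (auto elim!: eventually_mono intro: min)
  then have "(F x' - y) \<bullet> F' x' h = 0" for h
    by (rule orthogonal_derivative_at_local_min_dist[OF deriv[OF x'_r]])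
  then show ?thesis
    using that x'_r le_x by blast
qed

lemma stationary_residual_le:
  assumes x: "x \<in> ball xbar r" and x': "x' \<in> ball xbar r"
    and y: "y \<in> proj_set Q (F x)" and "F x \<notin> Q"
    and orth: "\<And>h. (F x' - y) \<bullet> F' x' h = 0"
  shows "norm (F x' - y) \<le> cos \<beta> * norm (F x - y) + \<eta> * norm (x - x')"
proof (cases "F x' = y")
  case True
  then show ?thesis
    using \<beta> \<eta>_nonneg by (simp add: cos_ge_zero)
next
  case False
  define v n e where "v = F x - y" and "n = F x' - y" and "e = F x - F x' - F' x' (x - x')"
  have "n \<noteq> 0" "v \<noteq> 0"
    using False \<open>F x \<notin> Q\<close> y proj_set_subset by (auto simp: n_def v_def)
  have "adjoint (blinfun_apply (F' x')) (y - F x') = 0"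
    using orth by (intro adjoint_eq_0_if_orthogonal_range bounded_linear.linear[OF blinfun.bounded_linear_right])
      (metis inner_minus_left minus_diff_eq neg_equal_0_iff_equal)
  then have "\<beta> \<le> vec_angle v n"
    using angle[OF x x' y] \<open>n \<noteq> 0\<close> \<open>v \<noteq> 0\<close> by (simp add: v_def n_def)
  then have "v \<bullet> n \<le> cos \<beta> * (norm v * norm n)"
    using \<beta> by (intro inner_le_cos_mult_norm_if_vec_angle_ge) auto
  moreover have "v \<bullet> n = n \<bullet> n + e \<bullet> n"
  proof -
    have "v = n + F' x' (x - x') + e"
      by (simp add: v_def n_def e_def)
    moreover have "F' x' (x - x') \<bullet> n = 0"
      using orth[of "x - x'"] by (simp add: n_def inner_commute)
    ultimately show ?thesis
      by (simp add: inner_add_left)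
  qed
  moreover have "- (norm e * norm n) \<le> e \<bullet> n"
    using Cauchy_Schwarz_ineq2[of e n] by linarith
  ultimately have "norm n * norm n \<le> (cos \<beta> * norm v + norm e) * norm n"
    by (simp add: algebra_simps flip: power2_eq_square power2_norm_eq_inner)
  then have "norm n \<le> cos \<beta> * norm v + norm e"
    using \<open>n \<noteq> 0\<close> by simp
  moreover have "norm e \<le> \<eta> * norm (x - x')"
    unfolding e_def using linearization_error[OF x x' x'] .
  ultimately show ?thesis
    by (simp add: v_def n_def)
qed

lemma lap_step_length:
  assumes x: "x \<in> ball xbar r"
    and s: "\<And>s'. norm (F x + F' x s - y) \<le> norm (F x + F' x s' - y)"
  shows "m * norm s \<le> 2 * norm (F x - y)"
proof -
  have "norm (F' x s) \<le> norm (F x + F' x s - y) + norm (F x - y)"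
    using norm_triangle_ineq4[of "F x + F' x s - y" "F x - y"] by simp
  also have "\<dots> \<le> 2 * norm (F x - y)"
    using s[of 0] by simp
  finally show ?thesis
    using deriv_bounded_below[OF x, of s] by linarith
qed

lemma eta_mult_le_if_scaled_le:
  assumes "m * norm w \<le> 2 * t"
  shows "\<eta> * norm w \<le> 2 * \<eta> / m * t"
  using mult_left_mono[OF assms \<eta>_nonneg] m_pos by (simp add: field_simps)

lemma lap_model_residual_le:
  assumes x: "(1 + 3 * L / m) * norm (x - xbar) < r"
    and y: "y \<in> proj_set Q (F x)" and "F x \<notin> Q"
    and s: "\<And>s'. norm (F x + F' x s - y) \<le> norm (F x + F' x s' - y)"
  shows "norm (F x + F' x s - y) \<le> (cos \<beta> + 4 * \<eta> / m) * norm (F x - y)"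
proof -
  have x_r: "x \<in> ball xbar r"
    using scaled_norm_lt_D(2)[OF x] by (simp add: dist_norm norm_minus_commute)
  obtain x' where x'_r: "x' \<in> ball xbar r" and orth: "\<And>h. (F x' - y) \<bullet> F' x' h = 0"
    and le_x: "norm (F x' - y) \<le> norm (F x - y)"
    using stationary_point_near[OF x y] by blast
  have "m * norm (x - x') \<le> norm (F x - F x')"
    using bounded_below[OF x_r x'_r] .
  also have "\<dots> \<le> norm (F x - y) + norm (F x' - y)"
    using norm_triangle_ineq4[of "F x - y" "F x' - y"] by simp
  finally have "m * norm (x - x') \<le> 2 * norm (F x - y)"
    using le_x by linarith
  note dist_x' = eta_mult_le_if_scaled_le[OF this]
  \<comment> \<open>The step towards the stationary point x' is a competitor in the least-squares problem.\<close>
  have "norm (F x + F' x s - y) \<le> norm (F x + F' x (x' - x) - y)"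
    using s .
  also have "\<dots> \<le> norm (F x' - y) + norm (F x - F x' - F' x (x - x'))"
    using norm_triangle_ineq[of "F x' - y" "F x - F x' - F' x (x - x')"]
    by (simp add: blinfun.diff_right algebra_simps)
  also have "\<dots> \<le> cos \<beta> * norm (F x - y) + 2 * (\<eta> * norm (x - x'))"
    using stationary_residual_le[OF x_r x'_r y \<open>F x \<notin> Q\<close> orth] linearization_error[OF x_r x'_r x_r]
    by simp
  also have "\<dots> \<le> (cos \<beta> + 4 * \<eta> / m) * norm (F x - y)"
  proof -
    have "(cos \<beta> + 4 * \<eta> / m) * norm (F x - y) = cos \<beta> * norm (F x - y) + 2 * (2 * \<eta> / m * norm (F x - y))"
      by (simp add: algebra_simps)
    then show ?thesis
      using dist_x' by linarith
  qed
  finally show ?thesis .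
qed

lemma lap_step_contraction:
  assumes x: "(1 + 3 * L / m) * norm (x - xbar) < r"
    and y: "y \<in> proj_set Q (F x)" and "F x \<notin> Q"
    and s: "\<And>s'. norm (F x + F' x s - y) \<le> norm (F x + F' x s' - y)"
  shows "norm (F (x + s) - y) \<le> rate * norm (F x - y)"
proof -
  have x_r: "x \<in> ball xbar r"
    using scaled_norm_lt_D(2)[OF x] by (simp add: dist_norm norm_minus_commute)
  have step: "m * norm s \<le> 2 * norm (F x - y)"
    using lap_step_length[OF x_r s] .
  have "m * norm s \<le> 3 * L * norm (x - xbar)"
    using step norm_proj_residual_le[OF x_r y] mult_nonneg_nonneg[OF L_nonneg norm_ge_zero[of "x - xbar"]]
    by linarith
  then have "norm s \<le> 3 * L / m * norm (x - xbar)"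
    using m_pos by (simp add: field_simps)
  then have "x + s \<in> ball xbar r"
    using scaled_norm_lt_D(1)[OF x] norm_triangle_ineq[of "x - xbar" s]
    by (simp add: dist_norm norm_minus_commute algebra_simps)
  then have "norm (F (x + s) - F x - F' x s) \<le> \<eta> * norm s"
    using linearization_error[OF _ x_r x_r, of "x + s"] by simp
  moreover have "norm (F (x + s) - y) \<le> norm (F x + F' x s - y) + norm (F (x + s) - F x - F' x s)"
    using norm_triangle_ineq[of "F x + F' x s - y" "F (x + s) - F x - F' x s"] by simp
  moreover have "rate * norm (F x - y) = (cos \<beta> + 4 * \<eta> / m) * norm (F x - y) + 2 * \<eta> / m * norm (F x - y)"
    by (simp add: algebra_simps)
  ultimately show ?thesis
    using lap_model_residual_le[OF x y \<open>F x \<notin> Q\<close> s] eta_mult_le_if_scaled_le[OF step] by linarith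
qed

lemma lap_step_infdist:
  assumes x: "(1 + 3 * L / m) * norm (x - xbar) < r" and step: "lap_step F F' Q x x'"
  shows "infdist (F x') Q \<le> rate * infdist (F x) Q \<and> norm (x' - x) \<le> 2 / m * infdist (F x) Q"
proof (cases "F x \<in> Q")
  case True
  then have "x' = x"
    using step by (simp add: lap_step_def)
  with True show ?thesis
    by simp
next
  case False
  then obtain y s where y: "y \<in> proj_set Q (F x)"
    and s: "\<And>s'. norm (F x + F' x s - y) \<le> norm (F x + F' x s' - y)" and "x' = x + s"
    using step unfolding lap_step_def by auto
  note dist_Fx = infdist_eq_norm_if_proj_set[OF y]
  have x_r: "x \<in> ball xbar r"
    using scaled_norm_lt_D(2)[OF x] by (simp add: dist_norm norm_minus_commute)
  have "infdist (F x') Q \<le> norm (F x' - y)"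
    using infdist_le[of y Q] y proj_set_subset by (auto simp: dist_norm)
  moreover have "norm (F x' - y) \<le> rate * infdist (F x) Q"
    using lap_step_contraction[OF x y False s] unfolding \<open>x' = x + s\<close> dist_Fx .
  moreover have "norm (x' - x) \<le> 2 / m * infdist (F x) Q"
    using lap_step_length[OF x_r s] m_pos unfolding \<open>x' = x + s\<close> dist_Fx
    by (simp add: field_simps)
  ultimately show ?thesis
    by linarith
qed

lemma lap_iterates_geometric:
  fixes xs :: "nat \<Rightarrow> 'a"
  defines "R \<equiv> r / (2 * (1 + 3 * L / m))"
  assumes rate: "rate < 1"
    and start: "(1 + 2 * L / (m * (1 - rate))) * norm (xs 0 - xbar) < R"
    and steps: "\<And>k. lap_step F F' Q (xs k) (xs (Suc k))"
  shows "xs k \<in> ball xbar R" and "infdist (F (xs k)) Q \<le> rate ^ k * infdist (F (xs 0)) Q"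
    and "norm (xs (Suc k) - xs k) \<le> 2 / m * infdist (F (xs 0)) Q * rate ^ k"
proof -
  define D where "D k = infdist (F (xs k)) Q" for k
  have "1 \<le> 1 + 3 * L / m"
    using L_nonneg m_pos by simp
  note R = basin_radius(2,3)[folded R_def]
  have step: "D (Suc k) \<le> rate * D k \<and> norm (xs (Suc k) - xs k) \<le> 2 / m * D k"
    if "xs k \<in> ball xbar R" for k
  proof -
    have "(1 + 3 * L / m) * norm (xs k - xbar) < (1 + 3 * L / m) * R"
      using that \<open>1 \<le> 1 + 3 * L / m\<close>
      by (intro mult_strict_left_mono) (auto simp: dist_norm norm_minus_commute)
    then have "(1 + 3 * L / m) * norm (xs k - xbar) < r"
      using R(1) by linarith
    then show ?thesis
      using lap_step_infdist[OF _ steps[of k]] by (simp add: D_def)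
  qed
  have "0 \<le> 2 * L / (m * (1 - rate)) * norm (xs 0 - xbar)"
    using L_nonneg m_pos rate by simp
  then have "norm (xs 0 - xbar) \<le> (1 + 2 * L / (m * (1 - rate))) * norm (xs 0 - xbar)"
    by (simp add: algebra_simps)
  then have "xs 0 \<in> ball xbar r"
    using start R(2) by (simp add: dist_norm norm_minus_commute)
  then have D0: "0 \<le> D 0" "D 0 \<le> L * norm (xs 0 - xbar)"
    using infdist_image_le by (simp_all add: D_def infdist_nonneg)
  have "2 / m * D 0 / (1 - rate) \<le> 2 / m * (L * norm (xs 0 - xbar)) / (1 - rate)"
    using D0(2) m_pos rate by (intro divide_right_mono mult_left_mono) auto
  then have "norm (xs 0 - xbar) + 2 / m * D 0 / (1 - rate) < R"
    using start by (simp add: algebra_simps)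
  moreover have "0 \<le> 2 / m"
    using m_pos by simp
  ultimately show "xs k \<in> ball xbar R" and "infdist (F (xs k)) Q \<le> rate ^ k * infdist (F (xs 0)) Q"
    and "norm (xs (Suc k) - xs k) \<le> 2 / m * infdist (F (xs 0)) Q * rate ^ k"
    using iterates_stay_in_ball[of xs xbar R D rate "2 / m", OF step rate_nonneg rate _ D0(1)]
    by (simp_all add: D_def)
qed

lemma lap_iterates_converge:
  assumes rate: "rate < 1"
    and start: "(1 + 2 * L / (m * (1 - rate))) * norm (xs 0 - xbar) < r / (2 * (1 + 3 * L / m))"
    and steps: "\<And>k. lap_step F F' Q (xs k) (xs (Suc k))"
  shows "\<exists>xhat. F xhat \<in> Q \<and> converges_linearly xs xhat"
proof -
  let ?D = "\<lambda>k. infdist (F (xs k)) Q"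
  note bounds = lap_iterates_geometric[where xs = xs, OF rate start steps]
  obtain xhat where lim: "xs \<longlonglongrightarrow> xhat"
    and dist: "\<And>k. norm (xs k - xhat) \<le> 2 / m * ?D 0 * rate ^ k / (1 - rate)"
    using geometric_steps_imp_convergent[OF rate_nonneg rate bounds(3)] by blast
  have "xhat \<in> cball xbar (r / (2 * (1 + 3 * L / m)))"
    by (rule closed_sequentially[OF closed_cball _ lim]) (use bounds(1) less_imp_le in auto)
  then have "xhat \<in> ball xbar r"
    using basin_radius(3) by simp
  then have "(\<lambda>k. F (xs k)) \<longlonglongrightarrow> F xhat"
    using lim deriv has_derivative_continuous isCont_tendsto_compose by blast
  moreover have "?D \<longlonglongrightarrow> 0"
  proof (rule Lim_null_comparison)
    show "\<forall>\<^sub>F k in sequentially. norm (?D k) \<le> rate ^ k * ?D 0"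
      using bounds(2) by (simp add: infdist_nonneg)
    show "(\<lambda>k. rate ^ k * ?D 0) \<longlonglongrightarrow> 0"
      using rate_nonneg rate by (intro tendsto_mult_left_zero LIMSEQ_power_zero) auto
  qed
  ultimately have "F xhat \<in> Q"
    using mem_closed_if_infdist_tendsto_0[OF closed_Q] F_xbar by blast
  moreover have "converges_linearly xs xhat"
    using rate_nonneg rate dist by (intro converges_linearlyI[of rate _ _ "2 / m * ?D 0 / (1 - rate)"]) auto
  ultimately show ?thesis
    by blast
qed

lemma lap_converges_linearly:
  assumes "rate < 1"
  shows "\<exists>\<epsilon>>0. \<forall>xs. xs 0 \<in> ball xbar \<epsilon> \<longrightarrow> (\<forall>k. lap_step F F' Q (xs k) (xs (Suc k))) \<longrightarrow>
           (\<exists>xhat. F xhat \<in> Q \<and> converges_linearly xs xhat)"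
proof -
  define K where "K = 1 + 2 * L / (m * (1 - rate))"
  define R where "R = r / (2 * (1 + 3 * L / m))"
  have "0 < K"
    using assms L_nonneg m_pos by (simp add: K_def add_pos_nonneg)
  have "0 < R"
    using basin_radius(1) by (simp add: R_def)
  show ?thesis
  proof (intro exI[of _ "R / K"] conjI allI impI)
    show "0 < R / K"
      using \<open>0 < K\<close> \<open>0 < R\<close> by simp
    fix xs assume "xs 0 \<in> ball xbar (R / K)" "\<forall>k. lap_step F F' Q (xs k) (xs (Suc k))"
    moreover from this(1) have "K * norm (xs 0 - xbar) < R"
      using \<open>0 < K\<close> by (simp add: dist_norm norm_minus_commute field_simps)
    ultimately show "\<exists>xhat. F xhat \<in> Q \<and> converges_linearly xs xhat"
      using lap_iterates_converge[OF assms] by (simp add: K_def R_def)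
  qed
qed

end

lemma lap_setting_near_regular_solution:
  fixes F :: "'a::euclidean_space \<Rightarrow> 'b::euclidean_space" and F' :: "'a \<Rightarrow> 'a \<Rightarrow>\<^sub>L 'b"
  assumes "closed Q" "F xbar \<in> Q"
    and U: "open U" "xbar \<in> U" "\<And>x. x \<in> U \<Longrightarrow> (F has_derivative blinfun_apply (F' x)) (at x)"
      "continuous_on U F'"
    and inj: "inj (blinfun_apply (F' xbar))"
    and "0 < \<alpha>" "0 < \<delta>"
    and angle_\<alpha>: "\<forall>x x' y. x \<in> ball xbar \<delta> \<longrightarrow> x' \<in> ball xbar \<delta> \<longrightarrow> y \<in> proj_set Q (F x) \<longrightarrow>
      adjoint (blinfun_apply (F' x')) (y - F x') = 0 \<longrightarrow> F x \<noteq> y \<longrightarrow> y \<noteq> F x' \<longrightarrow>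
      \<alpha> \<le> vec_angle (F x - y) (F x' - y)"
  obtains r m L \<eta> \<beta> where "lap_setting F F' xbar r m L \<eta> Q \<beta>" and "cos \<beta> + 6 * \<eta> / m < 1"
proof -
  \<comment> \<open>Capping the angle at pi/2 keeps cos beta nonnegative.\<close>
  define \<beta> where "\<beta> = min \<alpha> (pi / 2)"
  have \<beta>: "0 < \<beta>" "\<beta> \<le> pi / 2" "\<beta> \<le> \<alpha>"
    using \<open>0 < \<alpha>\<close> by (auto simp: \<beta>_def)
  have "cos \<beta> < 1"
    using cos_monotone_0_pi[of 0 \<beta>] \<beta> pi_gt_zero by simp
  obtain B where "0 < B" and B: "\<And>h. B * norm h \<le> norm (F' xbar h)"
    using linear_inj_bounded_below_pos[OF bounded_linear.linear[OF blinfun.bounded_linear_right] inj]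
    by blast
  \<comment> \<open>With m = B/2 this makes the contraction rate cos beta + 6 eta / m equal to (1 + cos beta) / 2.\<close>
  define \<eta> where "\<eta> = B * (1 - cos \<beta>) / 24"
  have "0 < \<eta>"
    using \<open>0 < B\<close> \<open>cos \<beta> < 1\<close> by (simp add: \<eta>_def)
  have "1 - cos \<beta> \<le> 12"
    using cos_ge_minus_one[of \<beta>] by linarith
  then have "\<eta> \<le> B / 2"
    using mult_left_mono[of "1 - cos \<beta>" 12 B] \<open>0 < B\<close> by (simp add: \<eta>_def)
  obtain r where "r \<le> \<delta>" and regular: "locally_regular F F' xbar r (B / 2) (norm (F' xbar) + \<eta>) \<eta>"
    using locally_regular_if_C1_injective[OF U B \<open>0 < \<eta>\<close> \<open>\<eta> \<le> B / 2\<close> \<open>0 < \<delta>\<close>] by blast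
  have "lap_setting F F' xbar r (B / 2) (norm (F' xbar) + \<eta>) \<eta> Q \<beta>"
  proof (rule lap_setting.intro[OF regular], unfold_locales)
    fix x x' y
    assume "x \<in> ball xbar r" "x' \<in> ball xbar r" "y \<in> proj_set Q (F x)"
      "adjoint (blinfun_apply (F' x')) (y - F x') = 0" "F x \<noteq> y" "y \<noteq> F x'"
    moreover have "ball xbar r \<subseteq> ball xbar \<delta>"
      using \<open>r \<le> \<delta>\<close> by (rule subset_ball)
    ultimately show "\<beta> \<le> vec_angle (F x - y) (F x' - y)"
      using angle_\<alpha> \<beta>(3) by (meson order_trans subsetD)
  qed (use assms(1,2) \<beta> in auto)
  moreover have "cos \<beta> + 6 * \<eta> / (B / 2) < 1"
    using \<open>0 < B\<close> \<open>cos \<beta> < 1\<close> by (simp add: \<eta>_def field_simps)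
  ultimately show ?thesis
    using that by blast
qed

theorem mainTheorem4:
  fixes F :: "'a::euclidean_space \<Rightarrow> 'b::euclidean_space"
    and F' :: "'a \<Rightarrow> ('a \<Rightarrow>\<^sub>L 'b)"
    and Q :: "'b set"
    and xbar :: 'a
  assumes Q_ne: "Q \<noteq> {}"
    and Q_closed: "closed Q"
    and C1: "\<exists>U. open U \<and> xbar \<in> U \<and> (\<forall>x\<in>U. (F has_derivative blinfun_apply (F' x)) (at x))
                 \<and> continuous_on U F'"
    and inj_deriv: "inj (blinfun_apply (F' xbar))"
    and Fxbar: "F xbar \<in> Q"
    and angle_cond: "\<exists>\<alpha>>0. \<exists>\<delta>>0. \<forall>x x' y.
        x \<in> ball xbar \<delta> \<longrightarrow> x' \<in> ball xbar \<delta> \<longrightarrow> y \<in> proj_set Q (F x) \<longrightarrow>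
        adjoint (blinfun_apply (F' x')) (y - F x') = 0 \<longrightarrow> F x \<noteq> y \<longrightarrow> y \<noteq> F x' \<longrightarrow>
        vec_angle (F x - y) (F x' - y) \<ge> \<alpha>"
  shows "\<exists>\<epsilon>>0. \<forall>xs :: nat \<Rightarrow> 'a.
           xs 0 \<in> ball xbar \<epsilon> \<longrightarrow> (\<forall>k. lap_step F F' Q (xs k) (xs (Suc k))) \<longrightarrow>
           (\<exists>xhat. F xhat \<in> Q \<and> converges_linearly xs xhat)"
proof -
  obtain U where U: "open U" "xbar \<in> U" "\<And>x. x \<in> U \<Longrightarrow> (F has_derivative blinfun_apply (F' x)) (at x)"
    "continuous_on U F'"
    using C1 by blast
  obtain \<alpha> \<delta> where "0 < \<alpha>" "0 < \<delta>" and angle_\<alpha>: "\<forall>x x' y.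
      x \<in> ball xbar \<delta> \<longrightarrow> x' \<in> ball xbar \<delta> \<longrightarrow> y \<in> proj_set Q (F x) \<longrightarrow>
      adjoint (blinfun_apply (F' x')) (y - F x') = 0 \<longrightarrow> F x \<noteq> y \<longrightarrow> y \<noteq> F x' \<longrightarrow>
      \<alpha> \<le> vec_angle (F x - y) (F x' - y)"
    using angle_cond by blast
  obtain r m L \<eta> \<beta> where "lap_setting F F' xbar r m L \<eta> Q \<beta>" and "cos \<beta> + 6 * \<eta> / m < 1"
    using lap_setting_near_regular_solution[OF Q_closed Fxbar U inj_deriv \<open>0 < \<alpha>\<close> \<open>0 < \<delta>\<close> angle_\<alpha>] .
  then show ?thesis
    by (rule lap_setting.lap_converges_linearly)
qed

end
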